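(* Let $p$ be a prime and $n\ge 1$, and suppose $p^n-1=st$ with positive integers $s<t$ and $\gcd(s,t)=1$. Let $\alpha$ be a generator of the multiplicative group $\mathbb{F}_{p^n}^\times$, and put $\beta=\alpha^t$, $\gamma=\alpha^s$. Let $\psi:\mathbb{F}_{p^n}\to\mathbb{F}_p$ be a fixed nonzero $\mathbb{F}_p$-linear map, and let $B=(B_{i,j})_{(i,j)\in\mathbb{Z}_s\times\mathbb{Z}_t}$ be given by $B_{i,j}=\psi(\beta^i\gamma^j)$. Then a subset $S\subset \mathbb{Z}_s\times\mathbb{Z}_t$ with $|S|=n$ is a sampling pattern if and only if it is a basis pattern.
   Context: Here $\mathbb{Z}_s=\mathbb{Z}/s\mathbb{Z}$, $\mathbb{Z}_t=\mathbb{Z}/t\mathbb{Z}$; the expression $\beta^i\gamma^j$ is well defined for $(i,j)\in\mathbb{Z}_s\times\mathbb{Z}_t$ since $\beta$ has order $s$ and $\gamma$ has order $t$, and $(i,j)\mapsto\beta^i\gamma^j$ is a bijection $\mathbb{Z}_s\times\mathbb{Z}_t\to\mathbb{F}_{p^n}^\times$. For $S\subset\mathbb{Z}_s\times\mathbb{Z}_t$, let $A|_S=\{\beta^i\gamma^j : (i,j)\in S\}\subset\mathbb{F}_{p^n}$. $S$ is a basis pattern if $A|_S$ is an $\mathbb{F}_p$-basis of $\mathbb{F}_{p^n}$. For $(a,b)\in\mathbb{Z}_s\times\mathbb{Z}_t$, the value pattern of $S$ under the shift $(a,b)$ is the vector $v_{a,b}=(B_{i+a,\,j+b})_{(i,j)\in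 S}\in\mathbb{F}_p^{S}\cong\mathbb{F}_p^n$ (indices taken mod $s$ and mod $t$). $S$ is a sampling pattern if the $p^n-1$ value patterns $v_{a,b}$, $(a,b)\in\mathbb{Z}_s\times\mathbb{Z}_t$, are pairwise distinct and are exactly the nonzero vectors of $\mathbb{F}_p^{S}$ (each occurring exactly once). *)

theory Defs
  imports Main "HOL-Computational_Algebra.Primes" "HOL-Library.Cardinality"
begin

definition prime_subfield :: "'a::field set" where
  "prime_subfield = range of_nat"

definition Fp_linear_functional :: "('a::field \<Rightarrow> 'a) \<Rightarrow> bool" where
  "Fp_linear_functional \<psi> \<longleftrightarrow>
     (\<forall>x. \<psi> x \<in> prime_subfield) \<and>
     (\<forall>x y. \<psi> (x + y) = \<psi> x + \<psi> y) \<and>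
     (\<forall>c x. c \<in> prime_subfield \<longrightarrow> \<psi> (c * x) = c * \<psi> x)"

definition Fp_basis :: "'a::field set \<Rightarrow> bool" where
  "Fp_basis X \<longleftrightarrow> finite X \<and>
     (\<forall>c. (\<forall>x\<in>X. c x \<in> prime_subfield) \<longrightarrow> (\<Sum>x\<in>X. c x * x) = 0 \<longrightarrow> (\<forall>x\<in>X. c x = 0)) \<and>
     (\<forall>y. \<exists>c. (\<forall>x\<in>X. c x \<in> prime_subfield) \<and> y = (\<Sum>x\<in>X. c x * x))"

text \<open>Z_s x Z_t is represented by {0..<s} x {0..<t}.  A|_S.\<close>
definition A_restr :: "'a::field \<Rightarrow> 'a \<Rightarrow> (nat \<times> nat) set \<Rightarrow> 'a set" where
  "A_restr \<beta> \<gamma> S = (\<lambda>(i,j). \<beta> ^ i * \<gamma> ^ j) ` S"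

definition basis_pattern :: "'a::field \<Rightarrow> 'a \<Rightarrow> (nat \<times> nat) set \<Rightarrow> bool" where
  "basis_pattern \<beta> \<gamma> S \<longleftrightarrow> Fp_basis (A_restr \<beta> \<gamma> S)"

text \<open>Value pattern v_{a,b}, a vector in F_p^S represented as a function that is 0 off S.\<close>
definition value_pattern ::
  "nat \<Rightarrow> nat \<Rightarrow> (nat \<Rightarrow> nat \<Rightarrow> 'a::zero) \<Rightarrow> (nat \<times> nat) set \<Rightarrow> nat \<times> nat \<Rightarrow> (nat \<times> nat \<Rightarrow> 'a)" where
  "value_pattern s t B S = (\<lambda>(a,b) (i,j). if (i,j) \<in> S then B ((i + a) mod s) ((j + b) mod t) else 0)"

definition nonzero_Fp_vectors :: "(nat \<times> nat) set \<Rightarrow> (nat \<times> nat \<Rightarrow> 'a::field) set" where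
  "nonzero_Fp_vectors S = {v. (\<forall>x. v x \<in> prime_subfield) \<and> (\<forall>x. x \<notin> S \<longrightarrow> v x = 0) \<and> v \<noteq> (\<lambda>_. 0)}"

definition sampling_pattern ::
  "nat \<Rightarrow> nat \<Rightarrow> (nat \<Rightarrow> nat \<Rightarrow> 'a::field) \<Rightarrow> (nat \<times> nat) set \<Rightarrow> bool" where
  "sampling_pattern s t B S \<longleftrightarrow>
     bij_betw (value_pattern s t B S) ({0..<s} \<times> {0..<t}) (nonzero_Fp_vectors S)"

end

theory Submission
  imports Defs "HOL-Library.FuncSet" "HOL-Number_Theory.Cong"
begin

text \<open>Write e(i,j) = \<beta>^i \<gamma>^j. Since \<alpha> has order st and gcd(s,t) = 1, the exponent t i + s j
  determines (i,j), so e is a bijection from Z_s x Z_t onto the nonzero field elements, and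
  v_{a,b} = (\<psi>(e(a,b) e(k)))_{k \<in> S}. Hence S is a sampling pattern iff L x = (\<psi>(x e(k)))_{k \<in> S}
  maps the nonzero elements bijectively onto the nonzero vectors of F_p^S, i.e., L being F_p-linear,
  iff L is a bijection from the field onto F_p^S. The pairing (x,y) \<mapsto> \<psi>(xy) is nondegenerate,
  so L is injective when e(S) spans; if L is onto, preimages of the unit vectors form a dual family,
  so e(S) is independent. Counting |F| = |F_p|^|S| supplies the missing half in each direction.\<close>

definition Fp_independent :: "'a::field set \<Rightarrow> bool" where
  "Fp_independent X \<longleftrightarrow>
     (\<forall>c. (\<forall>x\<in>X. c x \<in> prime_subfield) \<longrightarrow> (\<Sum>x\<in>X. c x * x) = 0 \<longrightarrow> (\<forall>x\<in>X. c x = 0))"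

definition Fp_spanning :: "'a::field set \<Rightarrow> bool" where
  "Fp_spanning X \<longleftrightarrow> (\<forall>y. \<exists>c. (\<forall>x\<in>X. c x \<in> prime_subfield) \<and> y = (\<Sum>x\<in>X. c x * x))"

lemma Fp_basis_iff: "Fp_basis X \<longleftrightarrow> finite X \<and> Fp_independent X \<and> Fp_spanning X"
  unfolding Fp_basis_def Fp_independent_def Fp_spanning_def ..

definition Fp_vectors :: "'b set \<Rightarrow> ('b \<Rightarrow> 'a::field) set" where
  "Fp_vectors S = {v. (\<forall>k. v k \<in> prime_subfield) \<and> (\<forall>k. k \<notin> S \<longrightarrow> v k = 0)}"

definition dual_coordinates :: "('a::field \<Rightarrow> 'a) \<Rightarrow> ('b \<Rightarrow> 'a) \<Rightarrow> 'b set \<Rightarrow> 'a \<Rightarrow> 'b \<Rightarrow> 'a" where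
  "dual_coordinates \<psi> e S x = (\<lambda>k. if k \<in> S then \<psi> (x * e k) else 0)"

lemma prime_subfield_0 [simp]: "0 \<in> prime_subfield"
  unfolding prime_subfield_def by (metis of_nat_0 rangeI)

lemma prime_subfield_1 [simp]: "1 \<in> prime_subfield"
  unfolding prime_subfield_def by (metis of_nat_1 rangeI)

lemma prime_subfield_add: "a \<in> prime_subfield \<Longrightarrow> b \<in> prime_subfield \<Longrightarrow> a + b \<in> prime_subfield"
  unfolding prime_subfield_def by (auto simp flip: of_nat_add)

lemma prime_subfield_uminus:
  assumes "CHAR('a) > 0" and "(a::'a::field) \<in> prime_subfield"
  shows "- a \<in> prime_subfield"
proof -
  obtain m where a: "a = of_nat m" using assms(2) unfolding prime_subfield_def by auto
  have "(of_nat (CHAR('a) - 1) :: 'a) = - 1"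
    using assms(1) by (metis Suc_diff_1 of_nat_CHAR of_nat_Suc add.commute eq_neg_iff_add_eq_0)
  then have "- a = of_nat (m * (CHAR('a) - 1))"
    using a by simp
  then show ?thesis unfolding prime_subfield_def by (metis rangeI)
qed

lemma prime_subfield_diff:
  "CHAR('a) > 0 \<Longrightarrow> (a::'a::field) \<in> prime_subfield \<Longrightarrow> b \<in> prime_subfield \<Longrightarrow> a - b \<in> prime_subfield"
  by (metis diff_conv_add_uminus prime_subfield_add prime_subfield_uminus)

lemma Fp_linear_functional_0: "Fp_linear_functional \<psi> \<Longrightarrow> \<psi> 0 = 0"
  unfolding Fp_linear_functional_def by (metis add_cancel_right_right)

lemma Fp_linear_functional_diff: "Fp_linear_functional \<psi> \<Longrightarrow> \<psi> (a - b) = \<psi> a - \<psi> b"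
  unfolding Fp_linear_functional_def by (metis eq_diff_eq)

lemma Fp_linear_functional_sum: "Fp_linear_functional \<psi> \<Longrightarrow> \<psi> (sum f A) = (\<Sum>x\<in>A. \<psi> (f x))"
  by (induction A rule: infinite_finite_induct)
    (simp_all add: Fp_linear_functional_0, simp add: Fp_linear_functional_def)

lemma Fp_linear_functional_combination:
  assumes "Fp_linear_functional \<psi>" and "\<forall>z\<in>X. c z \<in> prime_subfield"
  shows "\<psi> (\<Sum>z\<in>X. c z * f z) = (\<Sum>z\<in>X. c z * \<psi> (f z))"
  using assms unfolding Fp_linear_functional_sum[OF assms(1)]
  by (intro sum.cong) (auto simp: Fp_linear_functional_def)

lemma Fp_linear_functional_nondegenerate:
  assumes "\<exists>w. \<psi> w \<noteq> 0" and "(x::'a::field) \<noteq> 0"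
  obtains y where "\<psi> (x * y) \<noteq> 0"
proof -
  obtain w where "\<psi> w \<noteq> 0" using assms(1) by blast
  then have "\<psi> (x * (w / x)) \<noteq> 0" using assms(2) by simp
  then show thesis by (rule that)
qed

lemma inj_on_combinations_if_Fp_independent:
  fixes X :: "'a::field set"
  assumes "CHAR('a) > 0" and "Fp_independent X"
  shows "inj_on (\<lambda>c. \<Sum>x\<in>X. c x * x) (X \<rightarrow>\<^sub>E prime_subfield)"
proof (rule inj_onI)
  fix c d assume c: "c \<in> X \<rightarrow>\<^sub>E prime_subfield" and d: "d \<in> X \<rightarrow>\<^sub>E prime_subfield"
    and eq: "(\<Sum>x\<in>X. c x * x) = (\<Sum>x\<in>X. d x * x)"
  have "(\<Sum>x\<in>X. (c x - d x) * x) = 0"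
    using eq by (simp add: left_diff_distrib sum_subtractf)
  moreover have "\<forall>x\<in>X. c x - d x \<in> prime_subfield"
    using c d prime_subfield_diff[OF assms(1)] by blast
  ultimately have "\<forall>x\<in>X. c x - d x = 0"
    using assms(2) unfolding Fp_independent_def by (elim allE[of _ "\<lambda>x. c x - d x"]) blast
  then show "c = d" using PiE_ext[OF c d] by simp
qed

lemma combinations_eq_UNIV_iff_Fp_spanning:
  "(\<lambda>c. \<Sum>x\<in>X. c x * x) ` (X \<rightarrow>\<^sub>E prime_subfield) = UNIV \<longleftrightarrow> Fp_spanning X"
proof -
  have "y \<in> (\<lambda>c. \<Sum>x\<in>X. c x * x) ` (X \<rightarrow>\<^sub>E prime_subfield) \<longleftrightarrow>
      (\<exists>c. (\<forall>x\<in>X. c x \<in> prime_subfield) \<and> y = (\<Sum>x\<in>X. c x * x))" for y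
  proof
    assume "\<exists>c. (\<forall>x\<in>X. c x \<in> prime_subfield) \<and> y = (\<Sum>x\<in>X. c x * x)"
    then obtain c where "restrict c X \<in> X \<rightarrow>\<^sub>E prime_subfield" "y = (\<Sum>x\<in>X. restrict c X x * x)"
      by auto
    then show "y \<in> (\<lambda>c. \<Sum>x\<in>X. c x * x) ` (X \<rightarrow>\<^sub>E prime_subfield)"
      by (intro image_eqI[where x = "restrict c X"])
  qed auto
  then show ?thesis unfolding Fp_spanning_def by blast
qed

lemma card_Fp_basis:
  assumes "Fp_basis (X::'a::{finite,field} set)"
  shows "card (prime_subfield::'a set) ^ card X = CARD('a)"
proof -
  have "finite X" "Fp_independent X" "Fp_spanning X" using assms by (simp_all add: Fp_basis_iff)
  then have "bij_betw (\<lambda>c. \<Sum>x\<in>X. c x * x) (X \<rightarrow>\<^sub>E prime_subfield) UNIV"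
    by (simp add: bij_betw_def inj_on_combinations_if_Fp_independent finite_imp_CHAR_pos
        combinations_eq_UNIV_iff_Fp_spanning)
  then show ?thesis
    using bij_betw_same_card card_PiE[OF \<open>finite X\<close>, of "\<lambda>_. prime_subfield :: 'a set"] by fastforce
qed

lemma Fp_basis_if_independent_card:
  assumes "finite (X::'a::{finite,field} set)" and "Fp_independent X"
    and "card (prime_subfield::'a set) ^ card X = CARD('a)"
  shows "Fp_basis X"
proof -
  have "card ((\<lambda>c. \<Sum>x\<in>X. c x * x) ` (X \<rightarrow>\<^sub>E prime_subfield)) = card (UNIV::'a set)"
    using assms card_PiE[OF assms(1), of "\<lambda>_. prime_subfield :: 'a set"]
    by (simp add: card_image inj_on_combinations_if_Fp_independent finite_imp_CHAR_pos)
  then have "Fp_spanning X"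
    by (simp add: card_subset_eq flip: combinations_eq_UNIV_iff_Fp_spanning)
  then show ?thesis using assms by (simp add: Fp_basis_iff)
qed

lemma card_Fp_vectors:
  assumes "finite S"
  shows "card (Fp_vectors S :: ('b \<Rightarrow> 'a::field) set) = card (prime_subfield::'a set) ^ card S"
proof -
  let ?extend = "\<lambda>f k. if k \<in> S then f k else (0::'a)"
  have "Fp_vectors S = ?extend ` (S \<rightarrow>\<^sub>E prime_subfield)"
  proof (intro set_eqI iffI)
    fix v :: "'b \<Rightarrow> 'a" assume v: "v \<in> Fp_vectors S"
    then have "v = ?extend (restrict v S)" by (auto simp: Fp_vectors_def)
    moreover have "restrict v S \<in> S \<rightarrow>\<^sub>E prime_subfield" using v by (auto simp: Fp_vectors_def)
    ultimately show "v \<in> ?extend ` (S \<rightarrow>\<^sub>E prime_subfield)" by blast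
  qed (auto simp: Fp_vectors_def)
  moreover have "inj_on ?extend (S \<rightarrow>\<^sub>E prime_subfield)"
  proof (rule inj_onI)
    fix f g assume f: "f \<in> S \<rightarrow>\<^sub>E prime_subfield" and g: "g \<in> S \<rightarrow>\<^sub>E prime_subfield"
      and eq: "?extend f = ?extend g"
    show "f = g"
    proof (rule PiE_ext[OF f g])
      fix k assume "k \<in> S"
      then show "f k = g k" using fun_cong[OF eq, of k] by simp
    qed
  qed
  ultimately show ?thesis
    by (simp add: card_image card_PiE[OF assms])
qed

lemma dual_coordinates_in_Fp_vectors:
  "Fp_linear_functional \<psi> \<Longrightarrow> dual_coordinates \<psi> e S x \<in> Fp_vectors S"
  by (simp add: dual_coordinates_def Fp_vectors_def Fp_linear_functional_def)

lemma dual_coordinates_0: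
  "Fp_linear_functional \<psi> \<Longrightarrow> dual_coordinates \<psi> e S 0 = (\<lambda>_. 0)"
  by (auto simp: dual_coordinates_def Fp_linear_functional_0)

lemma inj_dual_coordinates_if_Fp_spanning:
  assumes lin: "Fp_linear_functional \<psi>" and nonzero: "\<exists>w. \<psi> w \<noteq> 0"
    and span: "Fp_spanning (e ` S)"
  shows "inj (dual_coordinates \<psi> e S)"
proof (rule injI, rule ccontr)
  fix x y assume eq: "dual_coordinates \<psi> e S x = dual_coordinates \<psi> e S y" and "x \<noteq> y"
  then obtain w where w: "\<psi> ((x - y) * w) \<noteq> 0"
    using Fp_linear_functional_nondegenerate[OF nonzero] by (metis right_minus_eq)
  obtain c where c: "\<forall>z\<in>e ` S. c z \<in> prime_subfield" and "w = (\<Sum>z\<in>e ` S. c z * z)"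
    using span unfolding Fp_spanning_def by blast
  then have "\<psi> ((x - y) * w) = (\<Sum>z\<in>e ` S. c z * \<psi> ((x - y) * z))"
    by (simp add: sum_distrib_left mult.left_commute Fp_linear_functional_combination[OF lin])
  also have "\<dots> = 0"
  proof (rule sum.neutral, rule ballI)
    fix z assume "z \<in> e ` S"
    then obtain k where "k \<in> S" "z = e k" by blast
    then have "\<psi> (x * z) = \<psi> (y * z)" using fun_cong[OF eq, of k] by (simp add: dual_coordinates_def)
    then show "c z * \<psi> ((x - y) * z) = 0"
      by (simp add: left_diff_distrib Fp_linear_functional_diff[OF lin])
  qed
  finally show False using w by contradiction
qed

lemma Fp_independent_if_dual_coordinates_onto:
  assumes lin: "Fp_linear_functional \<psi>" and "finite S" and inj: "inj_on e S"
    and onto: "Fp_vectors S \<subseteq> range (dual_coordinates \<psi> e S)"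
  shows "Fp_independent (e ` S)"
  unfolding Fp_independent_def
proof (intro allI impI ballI)
  fix c z0 assume c: "\<forall>z\<in>e ` S. c z \<in> prime_subfield"
    and dependence: "(\<Sum>z\<in>e ` S. c z * z) = 0" and "z0 \<in> e ` S"
  then obtain k0 where k0: "k0 \<in> S" "z0 = e k0" by blast
  define \<delta> :: "_ \<Rightarrow> 'a" where "\<delta> = (\<lambda>k. if k = k0 then 1 else 0)"
  have "\<delta> \<in> Fp_vectors S" using k0 by (simp add: \<delta>_def Fp_vectors_def)
  then obtain x where x: "dual_coordinates \<psi> e S x = \<delta>" using onto by blast
  have "0 = \<psi> (\<Sum>z\<in>e ` S. c z * (x * z))"
    using dependence by (simp add: Fp_linear_functional_0[OF lin] mult.left_commute flip: sum_distrib_left)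
  also have "\<dots> = (\<Sum>k\<in>S. c (e k) * \<psi> (x * e k))"
    using c inj by (simp add: Fp_linear_functional_combination[OF lin] sum.reindex)
  also have "\<dots> = (\<Sum>k\<in>S. if k = k0 then c (e k) else 0)"
  proof (rule sum.cong)
    fix k assume "k \<in> S"
    then have "\<psi> (x * e k) = \<delta> k" using fun_cong[OF x, of k] by (simp add: dual_coordinates_def)
    then show "c (e k) * \<psi> (x * e k) = (if k = k0 then c (e k) else 0)" by (simp add: \<delta>_def)
  qed simp
  also have "\<dots> = c z0"
    using k0 \<open>finite S\<close> by simp
  finally show "c z0 = 0" ..
qed

lemma Fp_basis_iff_bij_dual_coordinates:
  fixes \<psi> :: "'a::{finite,field} \<Rightarrow> 'a"
  assumes lin: "Fp_linear_functional \<psi>" and nonzero: "\<exists>w. \<psi> w \<noteq> 0"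
    and "finite S" and "inj_on e S"
  shows "Fp_basis (e ` S) \<longleftrightarrow> bij_betw (dual_coordinates \<psi> e S) UNIV (Fp_vectors S)"
proof -
  let ?L = "dual_coordinates \<psi> e S"
  have card_vectors: "card (Fp_vectors S :: (_ \<Rightarrow> 'a) set) = card (prime_subfield::'a set) ^ card (e ` S)"
    using \<open>finite S\<close> \<open>inj_on e S\<close> by (simp add: card_Fp_vectors card_image)
  show ?thesis
  proof
    assume basis: "Fp_basis (e ` S)"
    then have card: "card (Fp_vectors S :: (_ \<Rightarrow> 'a) set) = CARD('a)"
      using card_vectors card_Fp_basis by simp
    then have "finite (Fp_vectors S :: (_ \<Rightarrow> 'a) set)" by (intro card_ge_0_finite) simp
    moreover have "inj ?L"
      using basis lin nonzero by (simp add: Fp_basis_iff inj_dual_coordinates_if_Fp_spanning)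
    moreover have "range ?L \<subseteq> Fp_vectors S"
      using lin dual_coordinates_in_Fp_vectors by blast
    ultimately have "range ?L = Fp_vectors S"
      using card by (simp add: card_subset_eq card_image)
    with \<open>inj ?L\<close> show "bij_betw ?L UNIV (Fp_vectors S)" by (simp add: bij_betw_def)
  next
    assume bij: "bij_betw ?L UNIV (Fp_vectors S)"
    then have "Fp_independent (e ` S)"
      using Fp_independent_if_dual_coordinates_onto[OF lin \<open>finite S\<close> \<open>inj_on e S\<close>]
      by (simp add: bij_betw_def)
    moreover have "card (prime_subfield::'a set) ^ card (e ` S) = CARD('a)"
      using bij_betw_same_card[OF bij] card_vectors by simp
    ultimately show "Fp_basis (e ` S)"
      using \<open>finite S\<close> by (simp add: Fp_basis_if_independent_card)
  qed
qed

lemma bij_betw_dual_coordinates_nonzero_iff: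
  assumes lin: "Fp_linear_functional \<psi>"
  shows "bij_betw (dual_coordinates \<psi> e S) (UNIV - {0}) (Fp_vectors S - {\<lambda>_. 0})
    \<longleftrightarrow> bij_betw (dual_coordinates \<psi> e S) UNIV (Fp_vectors S)"
proof -
  let ?L = "dual_coordinates \<psi> e S"
  have "bij_betw ?L (UNIV - {0}) (Fp_vectors S - {\<lambda>_. 0})
      \<longleftrightarrow> bij_betw ?L (UNIV - {0} \<union> {0}) (Fp_vectors S - {\<lambda>_. 0} \<union> {?L 0})"
    by (rule notIn_Un_bij_betw3) (simp_all add: dual_coordinates_0[OF lin])
  also have "\<dots> \<longleftrightarrow> bij_betw ?L UNIV (Fp_vectors S)"
    using dual_coordinates_in_Fp_vectors[OF lin, of e S 0]
    by (simp add: dual_coordinates_0[OF lin] insert_absorb)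
  finally show ?thesis .
qed

lemma power_mod_period: "(x::'a::monoid_mult) ^ d = 1 \<Longrightarrow> x ^ (m mod d) = x ^ m"
  by (metis div_mult_mod_eq mult.commute power_add power_mult power_one mult_1)

lemma power_card_minus_one_eq_1:
  assumes "(x::'a::{finite,field}) \<noteq> 0"
  shows "x ^ (CARD('a) - 1) = 1"
proof -
  let ?U = "UNIV - {0::'a}"
  have "bij_betw ((*) x) ?U ?U"
    using assms by (intro bij_betwI[where g = "(*) (inverse x)"]) auto
  then have "\<Prod>?U = (\<Prod>y\<in>?U. x * y)"
    using prod.reindex_bij_betw[of "(*) x" ?U ?U "\<lambda>y. y"] by simp
  also have "\<dots> = x ^ card ?U * \<Prod>?U"
    by (simp add: prod.distrib)
  finally have "1 * \<Prod>?U = x ^ card ?U * \<Prod>?U" by simp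
  moreover have "\<Prod>?U \<noteq> 0" by simp
  ultimately have "x ^ card ?U = 1" by (metis mult_right_cancel)
  then show ?thesis by (simp add: card_Diff_singleton)
qed

lemma card_minus_one_le_period:
  fixes \<alpha> :: "'a::{finite,field}"
  assumes gen: "\<forall>x. x \<noteq> 0 \<longrightarrow> (\<exists>k. \<alpha> ^ k = x)" and "\<alpha> ^ d = 1" and "d > 0"
  shows "CARD('a) - 1 \<le> d"
proof -
  have "UNIV - {0} \<subseteq> (\<lambda>k. \<alpha> ^ k) ` {..<d}"
  proof
    fix x :: 'a assume "x \<in> UNIV - {0}"
    then obtain k where "\<alpha> ^ k = x" using gen by blast
    then have "x = \<alpha> ^ (k mod d)" using power_mod_period[OF \<open>\<alpha> ^ d = 1\<close>, of k] by simp
    moreover have "k mod d \<in> {..<d}" using \<open>d > 0\<close> by simp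
    ultimately show "x \<in> (\<lambda>k. \<alpha> ^ k) ` {..<d}" by (rule image_eqI)
  qed
  then have "card (UNIV - {0::'a}) \<le> card {..<d}" by (rule surj_card_le[rotated]) simp
  then show ?thesis by (simp add: card_Diff_singleton)
qed

lemma generator_power_eq_1_iff:
  fixes \<alpha> :: "'a::{finite,field}"
  assumes gen: "\<forall>x. x \<noteq> 0 \<longrightarrow> (\<exists>k. \<alpha> ^ k = x)" and "\<alpha> \<noteq> 0"
  shows "\<alpha> ^ m = 1 \<longleftrightarrow> (CARD('a) - 1) dvd m"
proof -
  let ?N = "CARD('a) - 1"
  have period: "\<alpha> ^ ?N = 1" using \<open>\<alpha> \<noteq> 0\<close> by (rule power_card_minus_one_eq_1)
  have "?N > 0" using card_mono[of UNIV "{0::'a, 1}"] by simp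
  show ?thesis
  proof
    assume "\<alpha> ^ m = 1"
    then have reduced: "\<alpha> ^ (m mod ?N) = 1" using power_mod_period[OF period] by simp
    show "?N dvd m"
    proof (rule ccontr)
      assume "\<not> ?N dvd m"
      then have "m mod ?N > 0" by (simp add: dvd_eq_mod_eq_0)
      then have "?N \<le> m mod ?N" by (rule card_minus_one_le_period[OF gen reduced])
      then show False using mod_less_divisor[OF \<open>?N > 0\<close>, of m] by linarith
    qed
  next
    assume "?N dvd m"
    then show "\<alpha> ^ m = 1" using period by (auto simp: power_mult)
  qed
qed

lemma generator_power_eq_iff:
  fixes \<alpha> :: "'a::{finite,field}"
  assumes gen: "\<forall>x. x \<noteq> 0 \<longrightarrow> (\<exists>k. \<alpha> ^ k = x)" and "\<alpha> \<noteq> 0"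
  shows "\<alpha> ^ i = \<alpha> ^ j \<longleftrightarrow> [i = j] (mod CARD('a) - 1)"
proof -
  have ordered: "\<alpha> ^ i = \<alpha> ^ j \<longleftrightarrow> [j = i] (mod CARD('a) - 1)" if "i \<le> j" for i j
  proof -
    have "\<alpha> ^ j = \<alpha> ^ i * \<alpha> ^ (j - i)" using that by (simp flip: power_add)
    then have "\<alpha> ^ i = \<alpha> ^ j \<longleftrightarrow> \<alpha> ^ (j - i) = 1" using \<open>\<alpha> \<noteq> 0\<close> by auto
    also have "\<dots> \<longleftrightarrow> [j = i] (mod CARD('a) - 1)"
      using that by (simp add: generator_power_eq_1_iff[OF gen \<open>\<alpha> \<noteq> 0\<close>] cong_altdef_nat)
    finally show ?thesis .
  qed
  show ?thesis
    using ordered[of i j] ordered[of j i] by (cases "i \<le> j") (auto simp: cong_sym_eq)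
qed

lemma generator_nonzero:
  fixes \<alpha> :: "'a::{finite,field}"
  assumes gen: "\<forall>x. x \<noteq> 0 \<longrightarrow> (\<exists>k. \<alpha> ^ k = x)" and "CARD('a) > 2"
  shows "\<alpha> \<noteq> 0"
proof
  assume "\<alpha> = 0"
  then have "UNIV \<subseteq> {0, 1::'a}"
    using gen by (auto simp: power_0_left split: if_splits)
  then have "CARD('a) \<le> 2" using card_mono[of "{0, 1::'a}" UNIV] by simp
  then show False using assms(2) by simp
qed

lemma cong_coprime_combination_cancel:
  fixes s t a a' b b' :: nat
  assumes "coprime s t" and "[t * a + s * b = t * a' + s * b'] (mod s)"
  shows "[a = a'] (mod s)"
proof -
  have "[t * a = t * a'] (mod s)" using assms(2) by (simp add: cong_def)
  then show ?thesis using assms(1) by (simp add: cong_mult_lcancel_nat coprime_commute)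
qed

lemma coprime_combination_cong_imp_eq:
  fixes s t a a' b b' :: nat
  assumes "coprime s t" and cong: "[t * a + s * b = t * a' + s * b'] (mod s * t)"
    and "a < s" "a' < s" "b < t" "b' < t"
  shows "a = a' \<and> b = b'"
proof
  have "[a = a'] (mod s)"
    using cong_coprime_combination_cancel[OF assms(1) cong_modulus_mult_nat[OF cong]] .
  then show "a = a'" using assms(3,4) by (simp add: cong_less_imp_eq_nat)
  have "[s * b + t * a = s * b' + t * a'] (mod t * s)" using cong by (simp add: ac_simps)
  then have "[b = b'] (mod t)"
    using cong_coprime_combination_cancel[of t s] cong_modulus_mult_nat assms(1)
    by (metis coprime_commute)
  then show "b = b'" using assms(5,6) by (simp add: cong_less_imp_eq_nat)
qed

lemma bij_betw_generator_grid:
  fixes \<alpha> :: "'a::{finite,field}"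
  assumes gen: "\<forall>x. x \<noteq> 0 \<longrightarrow> (\<exists>k. \<alpha> ^ k = x)" and "\<alpha> \<noteq> 0"
    and card: "CARD('a) - 1 = s * t" and "coprime s t"
  shows "bij_betw (\<lambda>(i, j). (\<alpha> ^ t) ^ i * (\<alpha> ^ s) ^ j) ({0..<s} \<times> {0..<t}) (UNIV - {0})"
proof -
  let ?e = "\<lambda>(i, j). (\<alpha> ^ t) ^ i * (\<alpha> ^ s) ^ j"
  have exponent: "(\<alpha> ^ t) ^ i * (\<alpha> ^ s) ^ j = \<alpha> ^ (t * i + s * j)" for i j
    by (simp add: power_add power_mult)
  have inj: "inj_on ?e ({0..<s} \<times> {0..<t})"
  proof (rule inj_onI, clarsimp)
    fix a b a' b'
    assume "a < s" "b < t" "a' < s" "b' < t"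
      and "(\<alpha> ^ t) ^ a * (\<alpha> ^ s) ^ b = (\<alpha> ^ t) ^ a' * (\<alpha> ^ s) ^ b'"
    then have "\<alpha> ^ (t * a + s * b) = \<alpha> ^ (t * a' + s * b')" by (simp only: exponent)
    then have "[t * a + s * b = t * a' + s * b'] (mod CARD('a) - 1)"
      using generator_power_eq_iff[OF gen \<open>\<alpha> \<noteq> 0\<close>] by blast
    then have "[t * a + s * b = t * a' + s * b'] (mod s * t)"
      unfolding card .
    then show "a = a' \<and> b = b'"
      by (rule coprime_combination_cong_imp_eq[OF \<open>coprime s t\<close>]) fact+
  qed
  have "?e ` ({0..<s} \<times> {0..<t}) = UNIV - {0}"
  proof (rule card_subset_eq)
    show "?e ` ({0..<s} \<times> {0..<t}) \<subseteq> UNIV - {0}" using \<open>\<alpha> \<noteq> 0\<close> by auto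
    show "card (?e ` ({0..<s} \<times> {0..<t})) = card (UNIV - {0::'a})"
      using card by (simp add: card_image[OF inj] card_Diff_singleton card_cartesian_product)
  qed simp
  with inj show ?thesis by (simp add: bij_betw_def)
qed

lemma value_pattern_eq_dual_coordinates:
  fixes \<beta> \<gamma> :: "'a::field"
  assumes "\<beta> ^ s = 1" and "\<gamma> ^ t = 1"
  shows "value_pattern s t (\<lambda>i j. \<psi> (\<beta> ^ i * \<gamma> ^ j)) S
    = dual_coordinates \<psi> (\<lambda>(i, j). \<beta> ^ i * \<gamma> ^ j) S \<circ> (\<lambda>(i, j). \<beta> ^ i * \<gamma> ^ j)"
proof (intro ext, clarsimp)
  fix a b i j
  have "\<beta> ^ ((i + a) mod s) * \<gamma> ^ ((j + b) mod t) = \<beta> ^ a * \<gamma> ^ b * (\<beta> ^ i * \<gamma> ^ j)"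
    by (simp add: power_mod_period[OF assms(1)] power_mod_period[OF assms(2)] power_add mult_ac)
  then show "value_pattern s t (\<lambda>i j. \<psi> (\<beta> ^ i * \<gamma> ^ j)) S (a, b) (i, j)
      = dual_coordinates \<psi> (\<lambda>(i, j). \<beta> ^ i * \<gamma> ^ j) S (\<beta> ^ a * \<gamma> ^ b) (i, j)"
    by (simp add: value_pattern_def dual_coordinates_def)
qed

lemma nonzero_Fp_vectors_eq: "nonzero_Fp_vectors S = Fp_vectors S - {\<lambda>_. 0}"
  by (auto simp: nonzero_Fp_vectors_def Fp_vectors_def)

theorem mainTheorem1:
  fixes p n s t :: nat and \<alpha> :: "'a::{finite,field}" and \<psi> :: "'a \<Rightarrow> 'a"
    and S :: "(nat \<times> nat) set"
  assumes "prime p" and "n \<ge> 1"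
    and "CARD('a) = p ^ n"
    and "p ^ n - 1 = s * t" and "0 < s" and "s < t" and "coprime s t"
    and "\<forall>x::'a. x \<noteq> 0 \<longrightarrow> (\<exists>k::nat. \<alpha> ^ k = x)"
    and "Fp_linear_functional \<psi>" and "\<exists>x. \<psi> x \<noteq> 0"
    and "S \<subseteq> {0..<s} \<times> {0..<t}" and "card S = n"
  shows "sampling_pattern s t (\<lambda>i j. \<psi> ((\<alpha> ^ t) ^ i * (\<alpha> ^ s) ^ j)) S
     \<longleftrightarrow> basis_pattern (\<alpha> ^ t) (\<alpha> ^ s) S"
proof -
  note gen = assms(8) and lin = assms(9)
  define e where "e = (\<lambda>(i, j). (\<alpha> ^ t) ^ i * (\<alpha> ^ s) ^ j)"
  define L where "L = dual_coordinates \<psi> e S"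
  have card: "CARD('a) - 1 = s * t" using assms(3,4) by simp
  moreover have "s * t \<ge> 1 * 2" using assms(5,6) by (intro mult_le_mono) auto
  ultimately have "\<alpha> \<noteq> 0" using generator_nonzero[OF gen] by simp
  then have "(\<alpha> ^ t) ^ s = 1" "(\<alpha> ^ s) ^ t = 1"
    using power_card_minus_one_eq_1[of \<alpha>] card by (simp_all add: mult.commute flip: power_mult)
  note value_pattern = value_pattern_eq_dual_coordinates[OF this, of \<psi> S, folded e_def L_def]
  have e: "bij_betw e ({0..<s} \<times> {0..<t}) (UNIV - {0})"
    unfolding e_def using bij_betw_generator_grid[OF gen \<open>\<alpha> \<noteq> 0\<close> card assms(7)] .
  have "finite S" "inj_on e S"
    using assms(11) finite_subset bij_betw_imp_inj_on[OF e] inj_on_subset by blast+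
  have "sampling_pattern s t (\<lambda>i j. \<psi> ((\<alpha> ^ t) ^ i * (\<alpha> ^ s) ^ j)) S
      \<longleftrightarrow> bij_betw L (UNIV - {0}) (Fp_vectors S - {\<lambda>_. 0})"
    unfolding sampling_pattern_def value_pattern nonzero_Fp_vectors_eq
    by (rule bij_betw_comp_iff[OF e, symmetric])
  also have "\<dots> \<longleftrightarrow> bij_betw L UNIV (Fp_vectors S)"
    unfolding L_def by (rule bij_betw_dual_coordinates_nonzero_iff[OF lin])
  also have "\<dots> \<longleftrightarrow> Fp_basis (e ` S)"
    unfolding L_def using Fp_basis_iff_bij_dual_coordinates[OF lin assms(10) \<open>finite S\<close> \<open>inj_on e S\<close>] ..
  also have "\<dots> \<longleftrightarrow> basis_pattern (\<alpha> ^ t) (\<alpha> ^ s) S"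
    by (simp add: basis_pattern_def A_restr_def e_def)
  finally show ?thesis .
qed

end
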